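(* Assume that the random variables $g_i(\theta)\tau_i$ and $h_i(\eta)\tau_i$ are integrable for every $i\ge1$, where $g_i(\theta)=\sup_{j}\|f_{ij}(\theta)Z_{ij}(\theta)\|$ and $h_i(\eta)=\sup_j|b_{ij}(\eta)(Z_{ij}^2(\theta)-\sigma^2)|$, and that conditions $(B_{f(\theta)})$ and $(B_{b(\eta)})$ hold. Then the observed estimating functions $$g_{n,1}^{obs}(\theta)=\sum_{i=1}^n\sum_{j=1}^{\tau_i}\Big(f_{ij}(\theta)Z_{ij}(\theta)I_{ij}^{obs}+f_{ij}(\theta)I_{ij}^{cen}\frac{E_\theta[Z_{ij}(\theta)I_{ij}^{cen}]}{E_\theta[I_{ij}^{cen}]}\Big),$$ $$g_{n,2}^{obs}(\eta)=\sum_{i=1}^n\sum_{j=1}^{\tau_i}\Big(b_{ij}(\eta)(Z_{ij}^2(\theta)-\sigma^2)I_{ij}^{obs}+b_{ij}(\eta)I_{ij}^{cen}\frac{E_\eta[(Z_{ij}^2(\theta)-\sigma^2)I_{ij}^{cen}]}{E_\eta[I_{ij}^{cen}]}\Big)$$ are unbiased: $E_\theta[g_{n,1}^{obs}(\theta)]=0$ and $E_\eta[g_{n,2}^{obs}(\eta)]=0$ for all $n\ge1$.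
   Context: Let $(\Omega,\mathcal F)$ be a measurable space carrying probability measures $P_\eta$, $\eta=(\theta^T,\sigma^2)^T\in K\subset\mathbb R^{p+1}$ with $K$ compact; $E_\eta$ ($E_\theta$) is expectation under $P_\eta$. For each subject $i\ge1$: event times $0=S_{i0}<S_{i1}<\cdots$, censoring time $0<C_i<\infty$, random covariates $x_{ij}$; the data vectors $(S_{ij},x_{ij},C_i;\ j\ge1)$ are i.i.d. over $i$. $\mathcal F_{ij}=\sigma\{S_{il}\ (0\le l\le j);x_{il}\ (1\le l\le j+1)\}$, $\mathcal G_{ij}=\sigma\{\mathcal F_{ij},\{S_{ik}\le C_i\},\{S_{ik}=C_i\}\ (1\le k\le j)\}$, $\mathcal G_{i0}=\mathcal F_{i0}$. Gap times $Y_{ij}=S_{ij}-S_{i,j-1}$ have finite second moments and, for every $\eta$, $E_\theta[Y_{ij}\mid\mathcal F_{i,j-1}]=\mu_{ij}(\theta)$, $\mathrm{var}_\eta[Y_{ij}\mid\mathcal F_{i,j-1}]=\sigma^2V_{ij}^2(\theta)$ with known $\mu_{ij}(\theta)$, $V_{ij}(\theta)>0$ depending on $\theta$ and $\mathcal F_{i,j-1}$-measurable quantities, differentiable in $\theta$. Standing assumption (A): the same two conditional moment identities hold with $\mathcal F_{i,j-1}$ replaced by $\mathcal G_{i,j-1}$. $f_{ij}(\theta)=V_{ij}^{-1}(\theta)\partial\mu_{ij}(\theta)/\partial\theta$, $Z_{ij}(\theta)=(Y_{ij}-\mu_{ij}(\theta))/V_{ij}(\theta)$, $E[Z_{ij}^2]<\infty$;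 $b_{ij}(\eta)$ are real $\mathcal F_{i,j-1}$-measurable random variables. $\tau_i=\min\{j\ge1:C_i\le S_{ij}\}$, assumed finite a.s. Indicators: $I_{ij}^{obs}=I\{S_{ij}\le C_i\}$, $I_{ij}^{cen}=I\{S_{i,j-1}<C_i<S_{ij}\}$. Terms with $E[I_{ij}^{cen}]=0$ are discarded (taken as $0$). Define $\mathcal O(f_i(\theta))=\sigma(f_{ij}(\theta)I_{ij}^{cen},I_{ij}^{cen},\ j\ge1)$ and $\mathcal O(b_i(\eta))=\sigma(b_{ij}(\eta)I_{ij}^{cen},I_{ij}^{cen},\ j\ge1)$. Condition $(B_{f(\theta)})$: $I_{ij}^{cen}E_\theta[Z_{ij}(\theta)\mid\mathcal O(f_i(\theta))]=I_{ij}^{cen}E_\theta[Z_{ij}(\theta)\mid I_{ij}^{cen}]$ for all $i,j$. Condition $(B_{b(\eta)})$ is the same with $\mathcal O(f_i(\theta))$ replaced by $\mathcal O(b_i(\eta))$. *)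

theory Defs
  imports "HOL-Probability.Probability"
begin

definition rv_events :: "'w measure \<Rightarrow> ('w \<Rightarrow> 'a) \<Rightarrow> 'a measure \<Rightarrow> 'w set set" where
  "rv_events M X N = {X -` A \<inter> space M | A. A \<in> sets N}"

definition F_alg :: "'w measure \<Rightarrow> 'c measure \<Rightarrow> (nat \<Rightarrow> nat \<Rightarrow> 'w \<Rightarrow> real)
    \<Rightarrow> (nat \<Rightarrow> nat \<Rightarrow> 'w \<Rightarrow> 'c) \<Rightarrow> nat \<Rightarrow> nat \<Rightarrow> 'w measure" where
  "F_alg M N S x i j = sigma (space M)
     ((\<Union>l\<in>{0..j}. rv_events M (S i l) borel) \<union> (\<Union>l\<in>{1..j+1}. rv_events M (x i l) N))"

definition G_alg :: "'w measure \<Rightarrow> 'c measure \<Rightarrow> (nat \<Rightarrow> nat \<Rightarrow> 'w \<Rightarrow> real)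
    \<Rightarrow> (nat \<Rightarrow> nat \<Rightarrow> 'w \<Rightarrow> 'c) \<Rightarrow> (nat \<Rightarrow> 'w \<Rightarrow> real) \<Rightarrow> nat \<Rightarrow> nat \<Rightarrow> 'w measure" where
  "G_alg M N S x C i j = sigma (space M)
     ((\<Union>l\<in>{0..j}. rv_events M (S i l) borel) \<union> (\<Union>l\<in>{1..j+1}. rv_events M (x i l) N)
      \<union> (\<Union>k\<in>{1..j}. {{\<omega>\<in>space M. S i k \<omega> \<le> C i \<omega>}, {\<omega>\<in>space M. S i k \<omega> = C i \<omega>}}))"

definition gap :: "(nat \<Rightarrow> nat \<Rightarrow> 'w \<Rightarrow> real) \<Rightarrow> nat \<Rightarrow> nat \<Rightarrow> 'w \<Rightarrow> real" where
  "gap S i j \<omega> = S i j \<omega> - S i (j - 1) \<omega>"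

definition Zres :: "(nat \<Rightarrow> nat \<Rightarrow> 'w \<Rightarrow> real) \<Rightarrow> (nat \<Rightarrow> nat \<Rightarrow> 't \<Rightarrow> 'w \<Rightarrow> real)
    \<Rightarrow> (nat \<Rightarrow> nat \<Rightarrow> 't \<Rightarrow> 'w \<Rightarrow> real) \<Rightarrow> 't \<Rightarrow> nat \<Rightarrow> nat \<Rightarrow> 'w \<Rightarrow> real" where
  "Zres S mu V \<theta> i j \<omega> = (gap S i j \<omega> - mu i j \<theta> \<omega>) / V i j \<theta> \<omega>"

definition fgrad :: "(nat \<Rightarrow> nat \<Rightarrow> real^'p \<Rightarrow> 'w \<Rightarrow> real) \<Rightarrow> (nat \<Rightarrow> nat \<Rightarrow> real^'p \<Rightarrow> 'w \<Rightarrow> real)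
    \<Rightarrow> real^'p \<Rightarrow> nat \<Rightarrow> nat \<Rightarrow> 'w \<Rightarrow> real^'p" where
  "fgrad mu V \<theta> i j \<omega> = (1 / V i j \<theta> \<omega>) *\<^sub>R
     (\<chi> k. frechet_derivative (\<lambda>t. mu i j t \<omega>) (at \<theta>) (axis k 1))"

definition tau :: "(nat \<Rightarrow> nat \<Rightarrow> 'w \<Rightarrow> real) \<Rightarrow> (nat \<Rightarrow> 'w \<Rightarrow> real) \<Rightarrow> nat \<Rightarrow> 'w \<Rightarrow> nat" where
  "tau S C i \<omega> = (LEAST j. 1 \<le> j \<and> C i \<omega> \<le> S i j \<omega>)"

definition Iobs :: "(nat \<Rightarrow> nat \<Rightarrow> 'w \<Rightarrow> real) \<Rightarrow> (nat \<Rightarrow> 'w \<Rightarrow> real) \<Rightarrow> nat \<Rightarrow> nat \<Rightarrow> 'w \<Rightarrow> real" where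
  "Iobs S C i j \<omega> = (if S i j \<omega> \<le> C i \<omega> then 1 else 0)"

definition Icen :: "(nat \<Rightarrow> nat \<Rightarrow> 'w \<Rightarrow> real) \<Rightarrow> (nat \<Rightarrow> 'w \<Rightarrow> real) \<Rightarrow> nat \<Rightarrow> nat \<Rightarrow> 'w \<Rightarrow> real" where
  "Icen S C i j \<omega> = (if S i (j - 1) \<omega> < C i \<omega> \<and> C i \<omega> < S i j \<omega> then 1 else 0)"

definition O_alg :: "'w measure \<Rightarrow> (nat \<Rightarrow> nat \<Rightarrow> 'w \<Rightarrow> 'v::{real_vector,topological_space})
    \<Rightarrow> (nat \<Rightarrow> nat \<Rightarrow> 'w \<Rightarrow> real) \<Rightarrow> nat \<Rightarrow> 'w measure" where
  "O_alg M g I i = sigma (space M)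
     (\<Union>j\<in>{1..}. rv_events M (\<lambda>\<omega>. I i j \<omega> *\<^sub>R g i j \<omega>) borel \<union> rv_events M (I i j) borel)"

definition sig_rv :: "'w measure \<Rightarrow> ('w \<Rightarrow> real) \<Rightarrow> 'w measure" where
  "sig_rv M X = sigma (space M) (rv_events M X borel)"

definition gobs1 :: "'w measure \<Rightarrow> (nat \<Rightarrow> nat \<Rightarrow> 'w \<Rightarrow> real) \<Rightarrow> (nat \<Rightarrow> 'w \<Rightarrow> real)
    \<Rightarrow> (nat \<Rightarrow> nat \<Rightarrow> real^'p \<Rightarrow> 'w \<Rightarrow> real) \<Rightarrow> (nat \<Rightarrow> nat \<Rightarrow> real^'p \<Rightarrow> 'w \<Rightarrow> real)
    \<Rightarrow> real^'p \<Rightarrow> nat \<Rightarrow> 'w \<Rightarrow> real^'p" where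
  "gobs1 M S C mu V \<theta> n \<omega> =
     (\<Sum>i=1..n. \<Sum>j=1..tau S C i \<omega>.
        (Zres S mu V \<theta> i j \<omega> * Iobs S C i j \<omega>) *\<^sub>R fgrad mu V \<theta> i j \<omega>
      + (Icen S C i j \<omega> * ((\<integral>\<omega>'. Zres S mu V \<theta> i j \<omega>' * Icen S C i j \<omega>' \<partial>M)
                             / (\<integral>\<omega>'. Icen S C i j \<omega>' \<partial>M))) *\<^sub>R fgrad mu V \<theta> i j \<omega>)"

text \<open>observed estimating function g^obs_{n,2}(eta), eta = (theta, sigma^2)\<close>
definition gobs2 :: "'w measure \<Rightarrow> (nat \<Rightarrow> nat \<Rightarrow> 'w \<Rightarrow> real) \<Rightarrow> (nat \<Rightarrow> 'w \<Rightarrow> real)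
    \<Rightarrow> (nat \<Rightarrow> nat \<Rightarrow> 't \<Rightarrow> 'w \<Rightarrow> real) \<Rightarrow> (nat \<Rightarrow> nat \<Rightarrow> 't \<Rightarrow> 'w \<Rightarrow> real)
    \<Rightarrow> (nat \<Rightarrow> nat \<Rightarrow> 'w \<Rightarrow> real) \<Rightarrow> 't \<Rightarrow> real \<Rightarrow> nat \<Rightarrow> 'w \<Rightarrow> real" where
  "gobs2 M S C mu V b \<theta> \<sigma>2 n \<omega> =
     (\<Sum>i=1..n. \<Sum>j=1..tau S C i \<omega>.
        b i j \<omega> * ((Zres S mu V \<theta> i j \<omega>)\<^sup>2 - \<sigma>2) * Iobs S C i j \<omega>
      + b i j \<omega> * Icen S C i j \<omega> *
          ((\<integral>\<omega>'. ((Zres S mu V \<theta> i j \<omega>')\<^sup>2 - \<sigma>2) * Icen S C i j \<omega>' \<partial>M)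
             / (\<integral>\<omega>'. Icen S C i j \<omega>' \<partial>M)))"

end

theory Submission
  imports Defs
begin

text \<open>
  Fix a subject i and an inter-event interval j, and let W be the residual Z_ij or
  Z_ij^2 - sigma^2. The observed and censored indicators add up to the indicator of the at-risk
  event {S_i,j-1 < C_i}, which lies in G_i,j-1; since assumption (A) makes W conditionally
  centred given G_i,j-1, the weighted residual over the whole at-risk event has mean zero.
  On the censored event, condition (B) replaces the conditional mean of W given the observed
  data by its conditional mean given I^cen_ij, which there is the constant
  E[W I^cen_ij] / E[I^cen_ij]; so the censored part of the residual and its imputed value have
  the same mean, and every term is centred. Terms with j > tau_i vanish, and the integrability
  of g_i tau_i (resp. h_i tau_i) bounds the series of all terms in L^1, which allows the
  random-length sum to be exchanged with the expectation.
\<close>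

section \<open>Sigma-algebras generated by random variables\<close>

lemma subalgebra_sigma:
  assumes "A \<subseteq> sets M"
  shows "subalgebra M (sigma (space M) A)"
proof -
  have "A \<subseteq> Pow (space M)" using assms sets.sets_into_space by blast
  with assms show ?thesis
    by (simp add: subalgebra_def sets_measure_of sets.sigma_sets_subset)
qed

lemma subalgebra_sigma_mono:
  assumes "A \<subseteq> B" "B \<subseteq> Pow \<Omega>"
  shows "subalgebra (sigma \<Omega> B) (sigma \<Omega> A)"
  using assms by (simp add: subalgebra_def sets_measure_of sigma_sets_mono')

lemma rv_events_subset_sets: "X \<in> measurable M N \<Longrightarrow> rv_events M X N \<subseteq> sets M"
  unfolding rv_events_def by (auto intro: measurable_sets)

lemma rv_events_subset_Pow: "rv_events M X N \<subseteq> Pow (space M)"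
  unfolding rv_events_def by auto

lemma measurable_sigma_rv_events:
  assumes "rv_events M X N \<subseteq> A" "A \<subseteq> Pow (space M)" "X \<in> space M \<rightarrow> space N"
  shows "X \<in> measurable (sigma (space M) A) N"
  using assms unfolding measurable_def rv_events_def
  by (auto simp: sets_measure_of space_measure_of_conv)

lemma subalgebra_O_alg:
  assumes "\<And>j. 1 \<le> j \<Longrightarrow> (\<lambda>\<omega>. I i j \<omega> *\<^sub>R g i j \<omega>) \<in> borel_measurable M"
    and "\<And>j. 1 \<le> j \<Longrightarrow> I i j \<in> borel_measurable M"
  shows "subalgebra M (O_alg M g I i)"
  unfolding O_alg_def using assms
  by (intro subalgebra_sigma) (auto dest!: rv_events_subset_sets)

lemma
  assumes "1 \<le> j"
  shows measurable_O_alg_indicator: "I i j \<in> borel_measurable (O_alg M g I i)"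
    and measurable_O_alg_product: "(\<lambda>\<omega>. I i j \<omega> *\<^sub>R g i j \<omega>) \<in> borel_measurable (O_alg M g I i)"
  unfolding O_alg_def using assms
  by (auto intro!: measurable_sigma_rv_events dest: rv_events_subset_Pow[THEN subsetD])

lemma measurable_O_alg_component:
  fixes g :: "nat \<Rightarrow> nat \<Rightarrow> 'w \<Rightarrow> 'v::euclidean_space"
  assumes "1 \<le> j"
  shows "(\<lambda>\<omega>. I i j \<omega> * (g i j \<omega> \<bullet> e)) \<in> borel_measurable (O_alg M g I i)"
proof -
  have [measurable]: "(\<lambda>\<omega>. I i j \<omega> *\<^sub>R g i j \<omega>) \<in> borel_measurable (O_alg M g I i)"
    by (rule measurable_O_alg_product[OF assms])
  have "(\<lambda>\<omega>. (I i j \<omega> *\<^sub>R g i j \<omega>) \<bullet> e) \<in> borel_measurable (O_alg M g I i)"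
    by measurable
  then show ?thesis
    by simp
qed

lemma space_sig_rv [simp]: "space (sig_rv M X) = space M"
  unfolding sig_rv_def by (simp add: space_measure_of_conv)

lemma sets_sig_rv: "sets (sig_rv M X) = {X -` A \<inter> space M | A. A \<in> sets borel}"
proof -
  have "sets (sig_rv M X) = sets (vimage_algebra (space M) X borel)"
    unfolding sig_rv_def rv_events_def sets_vimage_algebra
    by (rule sets_measure_of) auto
  also have "\<dots> = {X -` A \<inter> space M | A. A \<in> sets borel}"
    by (rule sets_vimage_algebra2) auto
  finally show ?thesis .
qed

lemma subalgebra_sig_rv: "X \<in> borel_measurable M \<Longrightarrow> subalgebra M (sig_rv M X)"
  unfolding sig_rv_def by (intro subalgebra_sigma rv_events_subset_sets)

lemma sig_rv_measurable_fibrewise_const: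
  fixes \<psi> :: "'w \<Rightarrow> 'b::t1_space"
  assumes "\<psi> \<in> borel_measurable (sig_rv M X)" "w \<in> space M" "w' \<in> space M" "X w = X w'"
  shows "\<psi> w = \<psi> w'"
proof -
  have "\<psi> -` {\<psi> w} \<inter> space (sig_rv M X) \<in> sets (sig_rv M X)"
    by (intro measurable_sets[OF assms(1)] borel_closed closed_singleton)
  then obtain B where B: "\<psi> -` {\<psi> w} \<inter> space M = X -` B \<inter> space M"
    unfolding sets_sig_rv by auto
  have "w \<in> X -` B" using B assms(2) by blast
  then have "w' \<in> \<psi> -` {\<psi> w} \<inter> space M" using B assms(3,4) by auto
  then show ?thesis by simp
qed

section \<open>Conditional expectations\<close>

(* When the event {I = 1} is null the division by zero yields 0, which matches the paper's
   convention of discarding censored terms with E[I] = 0. *)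
definition mean_given :: "'w measure \<Rightarrow> ('w \<Rightarrow> real) \<Rightarrow> ('w \<Rightarrow> real) \<Rightarrow> real" where
  "mean_given M W I = (\<integral>w. W w * I w \<partial>M) / (\<integral>w. I w \<partial>M)"

lemma real_cond_exp_sig_rv_indicator:
  assumes "prob_space M" and X [measurable]: "X \<in> borel_measurable M"
    and X01: "\<And>w. w \<in> space M \<Longrightarrow> X w = 0 \<or> X w = 1" and W: "integrable M W"
  shows "AE w in M. X w * real_cond_exp M (sig_rv M X) W w = X w * mean_given M W X"
proof -
  interpret prob_space M by fact
  interpret finite_measure_subalgebra M "sig_rv M X"
    by unfold_locales (rule subalgebra_sig_rv[OF X])
  define \<psi> where "\<psi> = real_cond_exp M (sig_rv M X) W"
  define A where "A = {w \<in> space M. X w = 1}"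
  have X_eq: "X w = indicator A w" if "w \<in> space M" for w
    using X01[OF that] that by (auto simp: A_def)
  have A_sig: "A \<in> sets (sig_rv M X)"
    unfolding sets_sig_rv A_def by (auto intro!: exI[of _ "{1}"])
  then have A_M [measurable]: "A \<in> sets M"
    using subalg by (auto simp: subalgebra_def)
  show ?thesis
  proof (cases "measure M A = 0")
    case True
    then have "AE w in M. w \<notin> A"
      by (intro AE_not_in null_setsI) (simp_all add: emeasure_eq_measure)
    then show ?thesis
      using AE_space by eventually_elim (simp add: X_eq)
  next
    case False
    then obtain w0 where "w0 \<in> A" by force
    then have \<psi>_A: "\<psi> w = \<psi> w0" if "w \<in> A" for w
      using that sig_rv_measurable_fibrewise_const[of \<psi> M X w w0]
      by (auto simp: \<psi>_def A_def)
    have "(\<integral>w. W w * X w \<partial>M) = (\<integral>w\<in>A. W w \<partial>M)"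
      unfolding set_lebesgue_integral_def
      by (intro Bochner_Integration.integral_cong) (auto simp: X_eq)
    also have "\<dots> = (\<integral>w\<in>A. \<psi> w0 \<partial>M)"
      unfolding \<psi>_def real_cond_exp_intA[OF W A_sig]
      by (intro set_lebesgue_integral_cong) (auto simp: \<psi>_A[unfolded \<psi>_def])
    also have "\<dots> = measure M A * \<psi> w0"
      by (simp add: set_lebesgue_integral_def)
    finally have "mean_given M W X = \<psi> w0"
      using False by (simp add: mean_given_def X_eq cong: Bochner_Integration.integral_cong)
    then show ?thesis
      using \<psi>_A by (intro AE_I2) (auto simp: X_eq \<psi>_def indicator_def)
  qed
qed

context finite_measure_subalgebra
begin

lemma real_cond_exp_divide_measurable:
  assumes V [measurable]: "V \<in> borel_measurable F" and V_nz: "\<And>w. w \<in> space M \<Longrightarrow> V w \<noteq> 0"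
    and U: "integrable M U"
  shows "AE w in M. real_cond_exp M F (\<lambda>w. U w / V w) w = real_cond_exp M F U w / V w"
proof -
  have [measurable]: "V \<in> borel_measurable M" "U \<in> borel_measurable M"
    using measurable_from_subalg[OF subalg V] U by auto
  have cancel: "V w * (U w / V w) = U w" if "w \<in> space M" for w
    using V_nz[OF that] by simp
  have "integrable M (\<lambda>w. V w * (U w / V w))"
    by (subst Bochner_Integration.integrable_cong[OF refl cancel]) (auto simp: U)
  then have "AE w in M. real_cond_exp M F (\<lambda>w. V w * (U w / V w)) w
                        = V w * real_cond_exp M F (\<lambda>w. U w / V w) w"
    by (intro real_cond_exp_mult) auto
  moreover have "AE w in M. real_cond_exp M F (\<lambda>w. V w * (U w / V w)) w = real_cond_exp M F U w"
    by (intro real_cond_exp_cong AE_I2) (auto simp: cancel V_nz)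
  ultimately show ?thesis
    using AE_space by eventually_elim (auto simp: V_nz field_simps)
qed

lemma real_cond_exp_standardized_residual:
  assumes Y: "integrable M Y" and mu: "mu \<in> borel_measurable F"
    and V: "V \<in> borel_measurable F" "\<And>w. w \<in> space M \<Longrightarrow> V w \<noteq> 0"
    and mean: "AE w in M. real_cond_exp M F Y w = mu w"
  shows "AE w in M. real_cond_exp M F (\<lambda>w. (Y w - mu w) / V w) w = 0"
proof -
  have mu_int: "integrable M mu"
    using real_cond_exp_int(1)[OF Y] measurable_from_subalg[OF subalg mu] mean
    by (rule integrable_cong_AE_imp)
  have "AE w in M. real_cond_exp M F (\<lambda>w. (Y w - mu w) / V w) w
                    = real_cond_exp M F (\<lambda>w. Y w - mu w) w / V w"
    using Y mu_int by (intro real_cond_exp_divide_measurable V) auto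
  moreover have "AE w in M. real_cond_exp M F (\<lambda>w. Y w - mu w) w
                    = real_cond_exp M F Y w - real_cond_exp M F mu w"
    using Y mu_int by (rule real_cond_exp_diff)
  moreover have "AE w in M. real_cond_exp M F mu w = mu w"
    using mu_int mu by (rule real_cond_exp_F_meas)
  ultimately show ?thesis
    using mean by eventually_elim simp
qed

lemma integrable_cond_mean_residual_sq:
  assumes Y [measurable]: "Y \<in> borel_measurable M" and Y_sq: "integrable M (\<lambda>w. (Y w)\<^sup>2)"
    and mu: "mu \<in> borel_measurable F" and mean: "AE w in M. real_cond_exp M F Y w = mu w"
  shows "integrable M (\<lambda>w. (Y w - mu w)\<^sup>2)"
proof (rule Bochner_Integration.integrable_bound)
  have [measurable]: "mu \<in> borel_measurable M"
    using measurable_from_subalg[OF subalg mu] .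
  have "integrable M (\<lambda>w. (real_cond_exp M F Y w)\<^sup>2)"
    using square_integrable_imp_integrable[OF Y Y_sq] Y_sq
    by (intro integrable_convex_cond_exp[where I = UNIV]) (auto simp: convex_power2)
  then have "integrable M (\<lambda>w. (mu w)\<^sup>2)"
    by (rule integrable_cong_AE_imp) (use mean in \<open>auto elim: eventually_mono\<close>)
  then show "integrable M (\<lambda>w. 2 * (Y w)\<^sup>2 + 2 * (mu w)\<^sup>2)"
    using Y_sq by simp
  show "AE w in M. norm ((Y w - mu w)\<^sup>2) \<le> norm (2 * (Y w)\<^sup>2 + 2 * (mu w)\<^sup>2)"
  proof (intro AE_I2)
    fix w
    have "0 \<le> (Y w + mu w)\<^sup>2" by simp
    then have "(Y w - mu w)\<^sup>2 \<le> 2 * (Y w)\<^sup>2 + 2 * (mu w)\<^sup>2"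
      by (simp add: power2_eq_square algebra_simps)
    then show "norm ((Y w - mu w)\<^sup>2) \<le> norm (2 * (Y w)\<^sup>2 + 2 * (mu w)\<^sup>2)"
      by simp
  qed
qed (use measurable_from_subalg[OF subalg mu] in measurable)

lemma real_cond_exp_standardized_residual_sq:
  assumes Y: "Y \<in> borel_measurable M" and Y_sq: "integrable M (\<lambda>w. (Y w)\<^sup>2)"
    and mu: "mu \<in> borel_measurable F"
    and V: "V \<in> borel_measurable F" "\<And>w. w \<in> space M \<Longrightarrow> V w \<noteq> 0"
    and mean: "AE w in M. real_cond_exp M F Y w = mu w"
    and var: "AE w in M. real_cond_exp M F (\<lambda>w. (Y w - mu w)\<^sup>2) w = \<sigma>2 * (V w)\<^sup>2"
    and Z_sq: "integrable M (\<lambda>w. ((Y w - mu w) / V w)\<^sup>2)"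
  shows "AE w in M. real_cond_exp M F (\<lambda>w. ((Y w - mu w) / V w)\<^sup>2 - \<sigma>2) w = 0"
proof -
  have "integrable M (\<lambda>w. (Y w - mu w)\<^sup>2)"
    by (rule integrable_cond_mean_residual_sq[OF Y Y_sq mu mean])
  then have "AE w in M. real_cond_exp M F (\<lambda>w. (Y w - mu w)\<^sup>2 / (V w)\<^sup>2) w
                        = real_cond_exp M F (\<lambda>w. (Y w - mu w)\<^sup>2) w / (V w)\<^sup>2"
    using V by (intro real_cond_exp_divide_measurable) auto
  moreover have "AE w in M. real_cond_exp M F (\<lambda>w. (Y w - mu w)\<^sup>2 / (V w)\<^sup>2 - \<sigma>2) w
      = real_cond_exp M F (\<lambda>w. (Y w - mu w)\<^sup>2 / (V w)\<^sup>2) w - real_cond_exp M F (\<lambda>w. \<sigma>2) w"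
    using Z_sq by (intro real_cond_exp_diff) (simp_all add: power_divide)
  moreover have "AE w in M. real_cond_exp M F (\<lambda>w. \<sigma>2) w = \<sigma>2"
    by (intro real_cond_exp_F_meas) auto
  ultimately show ?thesis
    unfolding power_divide using var AE_space by eventually_elim (simp add: V)
qed

end

context sigma_finite_subalgebra
begin

lemma integral_mult_cond_exp_eq_zero:
  assumes "k \<in> borel_measurable F" "W \<in> borel_measurable M" "integrable M (\<lambda>w. k w * W w)"
    and "AE w in M. real_cond_exp M F W w = 0"
  shows "(\<integral>w. k w * W w \<partial>M) = 0"
proof -
  have "(\<integral>w. k w * W w \<partial>M) = (\<integral>w. k w * real_cond_exp M F W w \<partial>M)"
    using real_cond_exp_intg(2)[OF assms(3,1,2)] by simp
  also have "\<dots> = 0"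
    using assms(4) by (auto intro!: integral_eq_zero_AE elim!: eventually_mono)
  finally show ?thesis .
qed

lemma integral_mult_cond_exp_const_on:
  assumes k: "k \<in> borel_measurable F" and W: "W \<in> borel_measurable M"
    and kW: "integrable M (\<lambda>w. k w * W w)"
    and const: "AE w in M. I w * real_cond_exp M F W w = I w * c"
    and supp: "\<And>w. w \<in> space M \<Longrightarrow> I w = 0 \<Longrightarrow> k w = 0"
  shows "integrable M (\<lambda>w. k w * c)" and "(\<integral>w. k w * W w \<partial>M) = (\<integral>w. k w * c \<partial>M)"
proof -
  have [measurable]: "k \<in> borel_measurable M"
    using measurable_from_subalg[OF subalg k] .
  have eq: "AE w in M. k w * real_cond_exp M F W w = k w * c"
    using const AE_space by eventually_elim (metis mult_cancel_left supp)
  show "integrable M (\<lambda>w. k w * c)"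
    using real_cond_exp_intg(1)[OF kW k W] _ eq by (rule integrable_cong_AE_imp) simp
  show "(\<integral>w. k w * W w \<partial>M) = (\<integral>w. k w * c \<partial>M)"
    using real_cond_exp_intg(2)[OF kW k W] integral_cong_AE[OF _ _ eq] by simp
qed

lemma integral_abs_mult_const_le:
  assumes k [measurable]: "k \<in> borel_measurable F" and W [measurable]: "W \<in> borel_measurable M"
    and kW: "integrable M (\<lambda>w. k w * W w)"
    and const: "AE w in M. I w * real_cond_exp M F W w = I w * c"
    and supp: "\<And>w. w \<in> space M \<Longrightarrow> I w = 0 \<Longrightarrow> k w = 0"
  shows "(\<integral>w. \<bar>k w * c\<bar> \<partial>M) \<le> (\<integral>w. \<bar>k w * W w\<bar> \<partial>M)"
proof -
  have [measurable]: "k \<in> borel_measurable M"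
    using measurable_from_subalg[OF subalg k] .
  have int: "integrable M (\<lambda>w. sgn c * \<bar>k w\<bar> * W w)"
    using kW by (rule Bochner_Integration.integrable_bound) (auto simp: abs_mult sgn_if)
  have "(\<integral>w. \<bar>k w * c\<bar> \<partial>M) = (\<integral>w. sgn c * \<bar>k w\<bar> * c \<partial>M)"
    by (intro Bochner_Integration.integral_cong) (auto simp: abs_mult sgn_if)
  also have "\<dots> = (\<integral>w. sgn c * \<bar>k w\<bar> * W w \<partial>M)"
    using integral_mult_cond_exp_const_on(2)[OF _ W int const] supp by simp
  also have "\<dots> \<le> (\<integral>w. \<bar>k w * W w\<bar> \<partial>M)"
  proof (intro integral_mono int integrable_abs kW)
    fix w
    have "sgn c * \<bar>k w\<bar> * W w \<le> \<bar>sgn c * \<bar>k w\<bar> * W w\<bar>"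
      by (rule abs_ge_self)
    also have "\<dots> \<le> \<bar>k w * W w\<bar>"
      by (simp add: abs_mult sgn_if)
    finally show "sgn c * \<bar>k w\<bar> * W w \<le> \<bar>k w * W w\<bar>" .
  qed
  finally show ?thesis .
qed

end

section \<open>A single inter-event interval\<close>

text \<open>A is the at-risk event {S_j-1 < C} in G = G_j-1, Io and Ic are the observed and censored
  indicators, f is the weight, W the residual and Om the sigma-algebra of condition (B).\<close>

locale censored_interval = prob_space M
  for M G Om :: "'w measure" and A :: "'w set" and Io Ic f W :: "'w \<Rightarrow> real" +
  assumes G: "subalgebra M G" and Om: "subalgebra M Om" and A_G: "A \<in> sets G"
    and Io_plus_Ic: "\<And>w. w \<in> space M \<Longrightarrow> Io w + Ic w = indicator A w"
    and Io [measurable]: "Io \<in> borel_measurable M" and Io_nonneg: "\<And>w. w \<in> space M \<Longrightarrow> 0 \<le> Io w"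
    and Ic: "Ic \<in> borel_measurable Om" and Ic01: "\<And>w. w \<in> space M \<Longrightarrow> Ic w = 0 \<or> Ic w = 1"
    and f_G: "f \<in> borel_measurable G" and f_Om: "(\<lambda>w. Ic w * f w) \<in> borel_measurable Om"
    and W: "integrable M W" and W_G: "AE w in M. real_cond_exp M G W w = 0"
    and B: "AE w in M. Ic w * real_cond_exp M Om W w = Ic w * real_cond_exp M (sig_rv M Ic) W w"
    and dom: "integrable M (\<lambda>w. \<bar>f w * W w\<bar> * indicator A w)"
begin

sublocale G: finite_measure_subalgebra M G
  by unfold_locales (rule G)

sublocale Om: finite_measure_subalgebra M Om
  by unfold_locales (rule Om)

abbreviation c :: real where
  "c \<equiv> mean_given M W Ic"

lemma measurable_M [measurable]:
  "f \<in> borel_measurable M" "Ic \<in> borel_measurable M" "W \<in> borel_measurable M" "A \<in> sets M"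
  using measurable_from_subalg[OF G f_G] measurable_from_subalg[OF Om Ic] W A_G G
  by (auto simp: subalgebra_def subset_eq)

lemma Ic_nonneg: "w \<in> space M \<Longrightarrow> 0 \<le> Ic w"
  using Ic01 by force

lemma integrable_dominated:
  assumes "\<And>w. w \<in> space M \<Longrightarrow> \<bar>h w\<bar> \<le> \<bar>f w * W w\<bar> * indicator A w"
    and "h \<in> borel_measurable M"
  shows "integrable M h"
  using dom assms(2) by (rule Bochner_Integration.integrable_bound) (auto intro!: AE_I2 assms(1))

lemma integrable_observed: "integrable M (\<lambda>w. \<bar>f w * W w\<bar> * Io w)"
proof (rule integrable_dominated)
  fix w assume w: "w \<in> space M"
  have "Io w \<le> indicator A w"
    using Io_plus_Ic[OF w] Ic_nonneg[OF w] by linarith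
  then show "\<bar>\<bar>f w * W w\<bar> * Io w\<bar> \<le> \<bar>f w * W w\<bar> * indicator A w"
    using Io_nonneg[OF w] by (simp add: mult_left_mono)
qed measurable

lemma integrable_censored: "integrable M (\<lambda>w. Ic w * f w * W w)"
proof (rule integrable_dominated)
  fix w assume w: "w \<in> space M"
  have "Ic w * \<bar>f w * W w\<bar> \<le> indicator A w * \<bar>f w * W w\<bar>"
    using Io_plus_Ic[OF w] Io_nonneg[OF w] by (intro mult_right_mono) auto
  then show "\<bar>Ic w * f w * W w\<bar> \<le> \<bar>f w * W w\<bar> * indicator A w"
    using Ic_nonneg[OF w] by (simp add: abs_mult mult_ac)
qed measurable

text \<open>Condition (B) makes the conditional mean of W given Om the constant c on the censored
  event, so the censored part of the term may be replaced by its imputed value.\<close>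

lemma cond_exp_Om_censored: "AE w in M. Ic w * real_cond_exp M Om W w = Ic w * c"
proof -
  have "AE w in M. Ic w * real_cond_exp M (sig_rv M Ic) W w = Ic w * c"
    using Ic01 W by (intro real_cond_exp_sig_rv_indicator prob_space_axioms) auto
  with B show ?thesis
    by eventually_elim simp
qed

lemma
  shows integrable_imputed: "integrable M (\<lambda>w. Ic w * f w * c)"
    and integral_censored_eq_imputed: "(\<integral>w. Ic w * f w * W w \<partial>M) = (\<integral>w. Ic w * f w * c \<partial>M)"
    and integral_abs_imputed_le: "(\<integral>w. \<bar>Ic w * f w * c\<bar> \<partial>M) \<le> (\<integral>w. \<bar>Ic w * f w * W w\<bar> \<partial>M)"
  using Om.integral_mult_cond_exp_const_on[OF f_Om _ integrable_censored cond_exp_Om_censored]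
    Om.integral_abs_mult_const_le[OF f_Om _ integrable_censored cond_exp_Om_censored]
  by auto

lemma integral_at_risk_eq_zero: "(\<integral>w. f w * indicator A w * W w \<partial>M) = 0"
proof (rule G.integral_mult_cond_exp_eq_zero[OF _ _ _ W_G])
  show "integrable M (\<lambda>w. f w * indicator A w * W w)"
    by (rule integrable_dominated) (auto simp: abs_mult)
qed (use f_G A_G in auto)

lemma term_eq:
  "w \<in> space M \<Longrightarrow> f w * W w * Io w + f w * Ic w * c
      = f w * indicator A w * W w - Ic w * f w * W w + Ic w * f w * c"
  by (simp add: Io_plus_Ic[symmetric] algebra_simps)

lemma integrable_term: "integrable M (\<lambda>w. f w * W w * Io w + f w * Ic w * c)"
proof -
  have "integrable M (\<lambda>w. f w * indicator A w * W w)"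
    by (rule integrable_dominated) (auto simp: abs_mult)
  then show ?thesis
    using integrable_censored integrable_imputed
    by (simp add: term_eq cong: Bochner_Integration.integrable_cong)
qed

lemma integral_term_eq_zero: "(\<integral>w. f w * W w * Io w + f w * Ic w * c \<partial>M) = 0"
proof -
  have "integrable M (\<lambda>w. f w * indicator A w * W w)"
    by (rule integrable_dominated) (auto simp: abs_mult)
  then show ?thesis
    using integrable_censored integrable_imputed integral_at_risk_eq_zero integral_censored_eq_imputed
    by (simp add: term_eq cong: Bochner_Integration.integral_cong)
qed

lemma integral_abs_term_le:
  "(\<integral>w. \<bar>f w * W w * Io w + f w * Ic w * c\<bar> \<partial>M) \<le> (\<integral>w. \<bar>f w * W w\<bar> * indicator A w \<partial>M)"
proof -
  have "(\<integral>w. \<bar>f w * W w * Io w + f w * Ic w * c\<bar> \<partial>M)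
      \<le> (\<integral>w. \<bar>f w * W w\<bar> * Io w + \<bar>Ic w * f w * c\<bar> \<partial>M)"
  proof (rule integral_mono)
    fix w assume w: "w \<in> space M"
    have "\<bar>f w * W w * Io w\<bar> = \<bar>f w * W w\<bar> * Io w"
      using Io_nonneg[OF w] by (simp add: abs_mult)
    then show "\<bar>f w * W w * Io w + f w * Ic w * c\<bar> \<le> \<bar>f w * W w\<bar> * Io w + \<bar>Ic w * f w * c\<bar>"
      using abs_triangle_ineq[of "f w * W w * Io w" "f w * Ic w * c"] by (simp add: mult_ac)
  qed (use integrable_term integrable_observed integrable_imputed in auto)
  also have "\<dots> \<le> (\<integral>w. \<bar>f w * W w\<bar> * Io w + \<bar>Ic w * f w * W w\<bar> \<partial>M)"
    using integrable_observed integrable_imputed integrable_censored integral_abs_imputed_le by simp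
  also have "\<dots> = (\<integral>w. \<bar>f w * W w\<bar> * indicator A w \<partial>M)"
    by (intro Bochner_Integration.integral_cong)
      (auto simp: Io_plus_Ic[symmetric] abs_mult Ic_nonneg algebra_simps)
  finally show ?thesis .
qed

end

section \<open>Sums with a random number of terms\<close>

lemma summable_integral_dominated_by_count:
  fixes D :: "nat \<Rightarrow> 'a \<Rightarrow> real" and N :: "'a \<Rightarrow> nat" and B :: "'a \<Rightarrow> ennreal"
  assumes D [measurable]: "\<And>n. D n \<in> borel_measurable M" and D_nonneg: "\<And>n w. 0 \<le> D n w"
    and D_le: "\<And>n w. w \<in> space M \<Longrightarrow> ennreal (D n w) \<le> B w"
    and D_vanish: "AE w in M. \<forall>n\<ge>N w. D n w = 0"
    and fin: "(\<integral>\<^sup>+ w. B w * ennreal (real (N w)) \<partial>M) < \<infinity>"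
  shows "integrable M (D n)" and "summable (\<lambda>n. \<integral>w. D n w \<partial>M)"
proof -
  have "AE w in M. (\<Sum>n. ennreal (D n w)) \<le> B w * ennreal (real (N w))"
    using D_vanish AE_space
  proof eventually_elim
    case (elim w)
    then have "(\<Sum>n. ennreal (D n w)) = (\<Sum>n<N w. ennreal (D n w))"
      by (intro suminf_finite) auto
    also have "\<dots> \<le> (\<Sum>n<N w. B w)"
      using elim by (intro sum_mono D_le)
    also have "\<dots> = B w * ennreal (real (N w))"
      by (simp add: ennreal_of_nat_eq_real_of_nat mult.commute)
    finally show ?case .
  qed
  then have "(\<integral>\<^sup>+ w. (\<Sum>n. ennreal (D n w)) \<partial>M) < \<infinity>"
    using fin by (auto intro: le_less_trans[OF nn_integral_mono_AE])
  then have sum_fin: "(\<Sum>n. \<integral>\<^sup>+ w. ennreal (D n w) \<partial>M) < \<infinity>"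
    by (simp add: nn_integral_suminf)
  show int: "integrable M (D n)" for n
    using ennreal_suminf_lessD[OF sum_fin, of n] D_nonneg by (intro integrableI_nonneg) auto
  have "(\<integral>\<^sup>+ w. ennreal (D n w) \<partial>M) = ennreal (\<integral>w. D n w \<partial>M)" for n
    using int D_nonneg by (intro nn_integral_eq_integral) auto
  then show "summable (\<lambda>n. \<integral>w. D n w \<partial>M)"
    using sum_fin D_nonneg by (intro summable_suminf_not_top) auto
qed

lemma random_length_sum_integral:
  fixes U :: "nat \<Rightarrow> 'a \<Rightarrow> real" and N :: "'a \<Rightarrow> nat"
  assumes N [measurable]: "N \<in> measurable M (count_space UNIV)"
    and U: "\<And>n. integrable M (U n)" and U_vanish: "AE w in M. \<forall>n\<ge>N w. U n w = 0"
    and summ: "summable (\<lambda>n. \<integral>w. \<bar>U n w\<bar> \<partial>M)"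
  shows "integrable M (\<lambda>w. \<Sum>n<N w. U n w)"
    and "(\<integral>w. (\<Sum>n<N w. U n w) \<partial>M) = (\<Sum>n. \<integral>w. U n w \<partial>M)"
proof -
  have [measurable]: "U n \<in> borel_measurable M" for n
    using U by auto
  have meas: "(\<lambda>w. \<Sum>n<N w. U n w) \<in> borel_measurable M"
    by (rule measurable_compose_countable'[where g = N and I = UNIV]) auto
  have eq: "AE w in M. (\<Sum>n. U n w) = (\<Sum>n<N w. U n w)"
    using U_vanish by eventually_elim (intro suminf_finite, auto)
  have "AE w in M. summable (\<lambda>n. norm (U n w))"
    using U_vanish
  proof eventually_elim
    case (elim w)
    then show ?case by (intro summable_finite[of "{..<N w}"]) auto
  qed
  note series = integrable_suminf[OF U this] integral_suminf[OF U this]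
  show "integrable M (\<lambda>w. \<Sum>n<N w. U n w)"
    using series(1) meas eq by (rule integrable_cong_AE_imp) (use summ in simp)
  show "(\<integral>w. (\<Sum>n<N w. U n w) \<partial>M) = (\<Sum>n. \<integral>w. U n w \<partial>M)"
    using series(2) integral_cong_AE[OF _ meas eq] summ by simp
qed

lemma integrable_sum_integral_eq_zero:
  assumes "\<And>i. i \<in> I \<Longrightarrow> integrable M (F i) \<and> (\<integral>w. F i w \<partial>M) = (0::real)"
  shows "integrable M (\<lambda>w. \<Sum>i\<in>I. F i w) \<and> (\<integral>w. (\<Sum>i\<in>I. F i w) \<partial>M) = 0"
  using assms by (simp add: Bochner_Integration.integral_sum)

lemma integrable_integral_eq_zero_componentwise:
  fixes F :: "'a \<Rightarrow> 'b::euclidean_space"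
  assumes "\<And>e. e \<in> Basis \<Longrightarrow> integrable M (\<lambda>w. F w \<bullet> e) \<and> (\<integral>w. F w \<bullet> e \<partial>M) = 0"
  shows "integrable M F \<and> (\<integral>w. F w \<partial>M) = 0"
proof
  have "integrable M (\<lambda>w. \<Sum>e\<in>Basis. (F w \<bullet> e) *\<^sub>R e)"
    using assms by (intro Bochner_Integration.integrable_sum integrable_scaleR_left) auto
  then show int: "integrable M F"
    by (simp add: euclidean_representation)
  show "(\<integral>w. F w \<partial>M) = 0"
  proof (rule euclidean_eqI)
    fix e :: 'b assume "e \<in> Basis"
    then show "(\<integral>w. F w \<partial>M) \<bullet> e = 0 \<bullet> e"
      using int assms by simp
  qed
qed

lemma nn_integral_SUP_abs_inner_le:
  fixes F :: "'i \<Rightarrow> 'a \<Rightarrow> 'b::euclidean_space" and N :: "'a \<Rightarrow> ennreal"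
  assumes "e \<in> Basis"
  shows "(\<integral>\<^sup>+ w. (\<Squnion>j\<in>J. ennreal \<bar>F j w \<bullet> e\<bar>) * N w \<partial>M)
           \<le> (\<integral>\<^sup>+ w. (\<Squnion>j\<in>J. ennreal (norm (F j w))) * N w \<partial>M)"
  using Basis_le_norm[OF assms] by (intro nn_integral_mono mult_right_mono SUP_mono' ennreal_leI) auto

section \<open>Censoring indicators\<close>

lemma Iobs_plus_Icen:
  assumes "strict_mono (\<lambda>j. S i j w)" "1 \<le> j" "w \<in> space M"
  shows "Iobs S C i j w + Icen S C i j w = indicator {w \<in> space M. S i (j - 1) w < C i w} w"
proof -
  have "S i (j - 1) w < S i j w"
    using assms(1,2) by (simp add: strict_mono_def)
  then show ?thesis
    using assms(3) by (auto simp: Iobs_def Icen_def indicator_def)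
qed

lemma Iobs_nonneg: "0 \<le> Iobs S C i j w"
  by (simp add: Iobs_def)

lemma Icen_01: "Icen S C i j w = 0 \<or> Icen S C i j w = 1"
  by (simp add: Icen_def)

lemma le_tau_iff:
  assumes mono: "strict_mono (\<lambda>j. S i j w)" and S0: "S i 0 w = 0" and C_pos: "0 < C i w"
    and fin: "\<exists>j\<ge>1. C i w \<le> S i j w" and j: "1 \<le> j"
  shows "j \<le> tau S C i w \<longleftrightarrow> S i (j - 1) w < C i w"
proof
  assume "j \<le> tau S C i w"
  then have "\<not> (1 \<le> j - 1 \<and> C i w \<le> S i (j - 1) w)"
    using j unfolding tau_def by (intro not_less_Least) simp
  then show "S i (j - 1) w < C i w"
    using S0 C_pos by (cases "j - 1 = 0") auto
next
  assume "S i (j - 1) w < C i w"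
  also have "C i w \<le> S i (tau S C i w) w"
    using LeastI_ex[OF fin] by (simp add: tau_def)
  finally show "j \<le> tau S C i w"
    using strict_mono_less[OF mono] by simp
qed

section \<open>Measurability of derivatives\<close>

lemma frechet_derivative_difference_quotient_LIMSEQ:
  fixes \<phi> :: "'a::real_normed_vector \<Rightarrow> real"
  assumes "\<phi> differentiable (at \<theta>)"
  shows "(\<lambda>m. (\<phi> (\<theta> + (1 / real (Suc m)) *\<^sub>R v) - \<phi> \<theta>) / (1 / real (Suc m)))
           \<longlonglongrightarrow> frechet_derivative \<phi> (at \<theta>) v"
proof -
  let ?D = "frechet_derivative \<phi> (at \<theta>)"
  have D: "(\<phi> has_derivative ?D) (at (\<theta> + 0 *\<^sub>R v))"
    using assms by (simp flip: frechet_derivative_works)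
  have line: "((\<lambda>s::real. \<theta> + s *\<^sub>R v) has_derivative (\<lambda>s. s *\<^sub>R v)) (at 0)"
    by (auto intro!: derivative_eq_intros)
  have "(\<lambda>s. ?D (s *\<^sub>R v)) = (*) (?D v)"
    using has_derivative_linear[OF D] by (auto simp: linear_scale)
  with has_derivative_compose[OF line D]
  have "((\<lambda>s. \<phi> (\<theta> + s *\<^sub>R v)) has_field_derivative ?D v) (at 0)"
    by (simp add: has_field_derivative_def)
  then have "((\<lambda>s. (\<phi> (\<theta> + s *\<^sub>R v) - \<phi> \<theta>) / s) \<longlongrightarrow> ?D v) (at 0)"
    by (simp add: has_field_derivative_iff)
  moreover have "filterlim (\<lambda>m. 1 / real (Suc m)) (at 0) sequentially"
    unfolding filterlim_at using LIMSEQ_inverse_real_of_nat by (simp add: inverse_eq_divide)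
  ultimately show ?thesis
    by (rule filterlim_compose)
qed

lemma borel_measurable_frechet_derivative:
  fixes \<phi> :: "'a::real_normed_vector \<Rightarrow> 'w \<Rightarrow> real"
  assumes [measurable]: "\<And>t. \<phi> t \<in> borel_measurable M"
    and diff: "\<And>w. w \<in> space M \<Longrightarrow> (\<lambda>t. \<phi> t w) differentiable (at \<theta>)"
  shows "(\<lambda>w. frechet_derivative (\<lambda>t. \<phi> t w) (at \<theta>) v) \<in> borel_measurable M"
  by (rule borel_measurable_LIMSEQ_real[OF frechet_derivative_difference_quotient_LIMSEQ[OF diff]])
    measurable

section \<open>The recurrent-event model\<close>

locale recurrent_event_model = prob_space M
  for M :: "'w measure" and N :: "'c measure"
    and S :: "nat \<Rightarrow> nat \<Rightarrow> 'w \<Rightarrow> real" and x :: "nat \<Rightarrow> nat \<Rightarrow> 'w \<Rightarrow> 'c"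
    and C :: "nat \<Rightarrow> 'w \<Rightarrow> real"
    and mu V :: "nat \<Rightarrow> nat \<Rightarrow> real^'p::finite \<Rightarrow> 'w \<Rightarrow> real"
    and \<theta> :: "real^'p" and \<sigma>2 :: real and b :: "nat \<Rightarrow> nat \<Rightarrow> 'w \<Rightarrow> real" +
  assumes S_meas [measurable]: "\<And>i j. S i j \<in> borel_measurable M"
    and x_meas [measurable]: "\<And>i j. x i j \<in> measurable M N"
    and C_meas [measurable]: "\<And>i. C i \<in> borel_measurable M"
    and S0: "\<And>i \<omega>. \<omega> \<in> space M \<Longrightarrow> S i 0 \<omega> = 0"
    and S_mono: "\<And>i \<omega>. \<omega> \<in> space M \<Longrightarrow> strict_mono (\<lambda>j. S i j \<omega>)"
    and C_pos: "\<And>i \<omega>. \<omega> \<in> space M \<Longrightarrow> 0 < C i \<omega>"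
    and tau_fin: "\<And>i. AE \<omega> in M. \<exists>j\<ge>1. C i \<omega> \<le> S i j \<omega>"
    and Y_sq: "\<And>i j. 1 \<le> j \<Longrightarrow> integrable M (\<lambda>\<omega>. (gap S i j \<omega>)\<^sup>2)"
    and mu_meas: "\<And>i j t. 1 \<le> j \<Longrightarrow> mu i j t \<in> borel_measurable (F_alg M N S x i (j - 1))"
    and V_meas: "\<And>i j. 1 \<le> j \<Longrightarrow> V i j \<theta> \<in> borel_measurable (F_alg M N S x i (j - 1))"
    and V_pos: "\<And>i j \<omega>. 1 \<le> j \<Longrightarrow> \<omega> \<in> space M \<Longrightarrow> 0 < V i j \<theta> \<omega>"
    and mu_diff: "\<And>i j \<omega>. 1 \<le> j \<Longrightarrow> \<omega> \<in> space M \<Longrightarrow> (\<lambda>t. mu i j t \<omega>) differentiable (at \<theta>)"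
    and mean_G: "\<And>i j. 1 \<le> j \<Longrightarrow>
          AE \<omega> in M. real_cond_exp M (G_alg M N S x C i (j - 1)) (gap S i j) \<omega> = mu i j \<theta> \<omega>"
    and var_G: "\<And>i j. 1 \<le> j \<Longrightarrow>
          AE \<omega> in M. real_cond_exp M (G_alg M N S x C i (j - 1))
                        (\<lambda>\<omega>. (gap S i j \<omega> - mu i j \<theta> \<omega>)\<^sup>2) \<omega> = \<sigma>2 * (V i j \<theta> \<omega>)\<^sup>2"
    and Z_sq: "\<And>i j. 1 \<le> j \<Longrightarrow> integrable M (\<lambda>\<omega>. (Zres S mu V \<theta> i j \<omega>)\<^sup>2)"
    and b_meas: "\<And>i j. 1 \<le> j \<Longrightarrow> b i j \<in> borel_measurable (F_alg M N S x i (j - 1))"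
begin

abbreviation \<G> :: "nat \<Rightarrow> nat \<Rightarrow> 'w measure" where
  "\<G> i j \<equiv> G_alg M N S x C i j"

lemma G_generators_subset_sets:
  "(\<Union>l\<in>{0..j}. rv_events M (S i l) borel) \<union> (\<Union>l\<in>{1..j+1}. rv_events M (x i l) N)
      \<union> (\<Union>k\<in>{1..j}. {{\<omega>\<in>space M. S i k \<omega> \<le> C i \<omega>}, {\<omega>\<in>space M. S i k \<omega> = C i \<omega>}})
    \<subseteq> sets M"
proof -
  have "{\<omega>\<in>space M. S i k \<omega> \<le> C i \<omega>} \<in> sets M" "{\<omega>\<in>space M. S i k \<omega> = C i \<omega>} \<in> sets M" for k
    by measurable
  then show ?thesis
    using rv_events_subset_sets[OF S_meas] rv_events_subset_sets[OF x_meas] by (simp add: UN_subset_iff)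
qed

lemma subalgebra_G: "subalgebra M (\<G> i j)"
  unfolding G_alg_def by (rule subalgebra_sigma[OF G_generators_subset_sets])

lemma subalgebra_F_G: "subalgebra (\<G> i j) (F_alg M N S x i j)"
  unfolding G_alg_def F_alg_def
  by (intro subalgebra_sigma_mono Un_upper1 order_trans[OF G_generators_subset_sets sets.space_closed])

lemma at_risk_in_G: "{w \<in> space M. S i j w < C i w} \<in> sets (\<G> i j)"
proof (cases "j = 0")
  case True
  then have "{w \<in> space M. S i j w < C i w} = space (\<G> i j)"
    using S0 C_pos by (auto simp: G_alg_def space_measure_of_conv)
  then show ?thesis by simp
next
  case False
  have "{\<omega>\<in>space M. S i j \<omega> \<le> C i \<omega>} \<in> sets (\<G> i j)" "{\<omega>\<in>space M. S i j \<omega> = C i \<omega>} \<in> sets (\<G> i j)"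
    unfolding G_alg_def sets_measure_of[OF order_trans[OF G_generators_subset_sets sets.space_closed]]
    using False by (auto intro!: sigma_sets.Basic UnI2 UN_I[of j])
  then have "{\<omega>\<in>space M. S i j \<omega> \<le> C i \<omega>} - {\<omega>\<in>space M. S i j \<omega> = C i \<omega>} \<in> sets (\<G> i j)"
    by blast
  also have "{\<omega>\<in>space M. S i j \<omega> \<le> C i \<omega>} - {\<omega>\<in>space M. S i j \<omega> = C i \<omega>}
      = {w \<in> space M. S i j w < C i w}"
    by auto
  finally show ?thesis .
qed

lemma measurable_F_imp_G: "f \<in> borel_measurable (F_alg M N S x i j) \<Longrightarrow> f \<in> borel_measurable (\<G> i j)"
  by (rule measurable_from_subalg[OF subalgebra_F_G])

lemma measurable_G_imp_M: "f \<in> borel_measurable (\<G> i j) \<Longrightarrow> f \<in> borel_measurable M"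
  by (rule measurable_from_subalg[OF subalgebra_G])

lemma measurable_tau [measurable]: "tau S C i \<in> measurable M (count_space UNIV)"
  unfolding tau_def[abs_def] by measurable

lemma measurable_Iobs [measurable]: "Iobs S C i j \<in> borel_measurable M"
  unfolding Iobs_def[abs_def] by measurable

lemma measurable_Icen [measurable]: "Icen S C i j \<in> borel_measurable M"
  unfolding Icen_def[abs_def] by measurable

lemma mu_G: "1 \<le> j \<Longrightarrow> mu i j \<theta> \<in> borel_measurable (\<G> i (j - 1))"
  by (rule measurable_F_imp_G, rule mu_meas)

lemma V_G: "1 \<le> j \<Longrightarrow> V i j \<theta> \<in> borel_measurable (\<G> i (j - 1))"
  by (rule measurable_F_imp_G, rule V_meas)

lemma b_G: "1 \<le> j \<Longrightarrow> b i j \<in> borel_measurable (\<G> i (j - 1))"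
  by (rule measurable_F_imp_G, rule b_meas)

lemma measurable_gap [measurable]: "gap S i j \<in> borel_measurable M"
  unfolding gap_def[abs_def] by measurable

lemma measurable_Zres [measurable]:
  assumes "1 \<le> j"
  shows "Zres S mu V \<theta> i j \<in> borel_measurable M"
proof -
  have [measurable]: "mu i j \<theta> \<in> borel_measurable M" "V i j \<theta> \<in> borel_measurable M"
    using measurable_G_imp_M[OF mu_G[OF assms]] measurable_G_imp_M[OF V_G[OF assms]] by auto
  show ?thesis
    unfolding Zres_def[abs_def] by measurable
qed

lemma integrable_Zres: "1 \<le> j \<Longrightarrow> integrable M (Zres S mu V \<theta> i j)"
  by (rule square_integrable_imp_integrable[OF measurable_Zres Z_sq])

lemma cond_exp_Zres:
  assumes j: "1 \<le> j"
  shows "AE w in M. real_cond_exp M (\<G> i (j - 1)) (Zres S mu V \<theta> i j) w = 0"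
proof -
  interpret finite_measure_subalgebra M "\<G> i (j - 1)"
    by unfold_locales (rule subalgebra_G)
  show ?thesis
    unfolding Zres_def[abs_def]
    by (rule real_cond_exp_standardized_residual[OF
          square_integrable_imp_integrable[OF measurable_gap Y_sq[OF j]] mu_G[OF j] V_G[OF j] _ mean_G[OF j]])
      (simp add: V_pos[OF j, THEN less_imp_neq, symmetric])
qed

lemma cond_exp_Zres_sq:
  assumes j: "1 \<le> j"
  shows "AE w in M. real_cond_exp M (\<G> i (j - 1)) (\<lambda>w. (Zres S mu V \<theta> i j w)\<^sup>2 - \<sigma>2) w = 0"
proof -
  interpret finite_measure_subalgebra M "\<G> i (j - 1)"
    by unfold_locales (rule subalgebra_G)
  show ?thesis
    unfolding Zres_def
    by (rule real_cond_exp_standardized_residual_sq[OF measurable_gap Y_sq[OF j] mu_G[OF j] V_G[OF j] _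
          mean_G[OF j] var_G[OF j] Z_sq[OF j, unfolded Zres_def]])
      (simp add: V_pos[OF j, THEN less_imp_neq, symmetric])
qed

lemma fgrad_component_measurable:
  assumes j: "1 \<le> j" and e: "e \<in> Basis"
  shows "(\<lambda>w. fgrad mu V \<theta> i j w \<bullet> e) \<in> borel_measurable (\<G> i (j - 1))"
proof -
  obtain k where k: "e = axis k 1"
    using e by (auto simp: Basis_vec_def)
  have "space (F_alg M N S x i (j - 1)) = space M"
    by (simp add: F_alg_def space_measure_of_conv)
  then have "(\<lambda>w. frechet_derivative (\<lambda>t. mu i j t w) (at \<theta>) e)
      \<in> borel_measurable (F_alg M N S x i (j - 1))"
    using mu_diff[OF j] by (intro borel_measurable_frechet_derivative[OF mu_meas[OF j]]) auto
  then have [measurable]: "(\<lambda>w. frechet_derivative (\<lambda>t. mu i j t w) (at \<theta>) e)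
      \<in> borel_measurable (\<G> i (j - 1))"
    by (rule measurable_F_imp_G)
  have [measurable]: "V i j \<theta> \<in> borel_measurable (\<G> i (j - 1))"
    using j by (rule V_G)
  have "(\<lambda>w. frechet_derivative (\<lambda>t. mu i j t w) (at \<theta>) e / V i j \<theta> w)
      \<in> borel_measurable (\<G> i (j - 1))"
    by measurable
  then show ?thesis
    unfolding k fgrad_def cart_eq_inner_axis[symmetric] by simp
qed

lemma measurable_fgrad [measurable]:
  assumes "1 \<le> j"
  shows "fgrad mu V \<theta> i j \<in> borel_measurable M"
  by (subst borel_measurable_euclidean_space)
    (auto intro: measurable_G_imp_M fgrad_component_measurable assms)

abbreviation at_risk :: "nat \<Rightarrow> nat \<Rightarrow> 'w set" where
  "at_risk i j \<equiv> {w \<in> space M. S i (j - 1) w < C i w}"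

lemma Iobs_plus_Icen_at_risk:
  assumes "w \<in> space M" "1 \<le> j"
  shows "Iobs S C i j w + Icen S C i j w = indicator (at_risk i j) w"
  using Iobs_plus_Icen[where S = S and i = i, OF S_mono[OF assms(1)] assms(2,1)] .

lemma after_tau:
  "AE w in M. \<forall>n\<ge>tau S C i w.
     w \<notin> at_risk i (Suc n) \<and> Iobs S C i (Suc n) w = 0 \<and> Icen S C i (Suc n) w = 0"
  using tau_fin[of i] AE_space
proof eventually_elim
  case (elim w)
  show ?case
  proof (intro allI impI)
    fix n assume "tau S C i w \<le> n"
    then have not_at_risk: "w \<notin> at_risk i (Suc n)"
      using le_tau_iff[of S i w C "Suc n"] elim S_mono S0 C_pos by auto
    have "0 \<le> Icen S C i (Suc n) w"
      using Icen_01[of S C i "Suc n" w] by auto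
    moreover have "Iobs S C i (Suc n) w + Icen S C i (Suc n) w = 0"
      using Iobs_plus_Icen_at_risk[OF elim(2), of "Suc n"] not_at_risk by simp
    ultimately show "w \<notin> at_risk i (Suc n) \<and> Iobs S C i (Suc n) w = 0 \<and> Icen S C i (Suc n) w = 0"
      using not_at_risk Iobs_nonneg[of S C i "Suc n" w] by (simp add: add_nonneg_eq_0_iff)
  qed
qed

lemma at_risk_summable:
  fixes g :: "nat \<Rightarrow> 'w \<Rightarrow> real"
  assumes [measurable]: "\<And>n. g (Suc n) \<in> borel_measurable M"
    and dom: "(\<integral>\<^sup>+ w. (\<Squnion>j\<in>{1..}. ennreal \<bar>g j w\<bar>) * ennreal (real (tau S C i w)) \<partial>M) < \<infinity>"
  shows "integrable M (\<lambda>w. \<bar>g (Suc n) w\<bar> * indicator (at_risk i (Suc n)) w)"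
    and "summable (\<lambda>n. \<integral>w. \<bar>g (Suc n) w\<bar> * indicator (at_risk i (Suc n)) w \<partial>M)"
proof -
  let ?D = "\<lambda>n w. \<bar>g (Suc n) w\<bar> * indicator (at_risk i (Suc n)) w"
  have "?D n \<in> borel_measurable M" for n
    by measurable
  moreover have "0 \<le> ?D n w" for n w
    by simp
  moreover have "ennreal (?D n w) \<le> (\<Squnion>j\<in>{1..}. ennreal \<bar>g j w\<bar>)" for n w
    by (rule order_trans[OF _ SUP_upper[of "Suc n"]]) (auto simp: indicator_def intro: ennreal_leI)
  moreover have "AE w in M. \<forall>n\<ge>tau S C i w. ?D n w = 0"
    using after_tau[of i] by eventually_elim auto
  ultimately show "integrable M (?D n)" "summable (\<lambda>n. \<integral>w. ?D n w \<partial>M)"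
    using summable_integral_dominated_by_count[OF _ _ _ _ dom, of ?D] by blast+
qed

lemma subject_unbiased:
  fixes f W :: "nat \<Rightarrow> 'w \<Rightarrow> real" and Om :: "'w measure"
  assumes f: "\<And>j. 1 \<le> j \<Longrightarrow> f j \<in> borel_measurable (\<G> i (j - 1))"
    and W: "\<And>j. 1 \<le> j \<Longrightarrow> integrable M (W j)"
    and W_G: "\<And>j. 1 \<le> j \<Longrightarrow> AE w in M. real_cond_exp M (\<G> i (j - 1)) (W j) w = 0"
    and Om: "subalgebra M Om"
    and Icen_Om: "\<And>j. 1 \<le> j \<Longrightarrow> Icen S C i j \<in> borel_measurable Om"
    and f_Om: "\<And>j. 1 \<le> j \<Longrightarrow> (\<lambda>w. Icen S C i j w * f j w) \<in> borel_measurable Om"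
    and B: "\<And>j. 1 \<le> j \<Longrightarrow> AE w in M. Icen S C i j w * real_cond_exp M Om (W j) w
              = Icen S C i j w * real_cond_exp M (sig_rv M (Icen S C i j)) (W j) w"
    and dom: "(\<integral>\<^sup>+ w. (\<Squnion>j\<in>{1..}. ennreal \<bar>f j w * W j w\<bar>) * ennreal (real (tau S C i w)) \<partial>M) < \<infinity>"
  defines "T \<equiv> \<lambda>j w. f j w * W j w * Iobs S C i j w
                     + f j w * Icen S C i j w * mean_given M (W j) (Icen S C i j)"
  shows "integrable M (\<lambda>w. \<Sum>j=1..tau S C i w. T j w) \<and> (\<integral>w. (\<Sum>j=1..tau S C i w. T j w) \<partial>M) = 0"
proof -
  have [measurable]: "f (Suc n) \<in> borel_measurable M" "W (Suc n) \<in> borel_measurable M" for n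
    using measurable_G_imp_M[OF f] W by auto
  have "(\<lambda>w. f (Suc n) w * W (Suc n) w) \<in> borel_measurable M" for n
    by measurable
  note dominant = at_risk_summable[of "\<lambda>j w. f j w * W j w", OF this dom]
  have interval: "integrable M (T (Suc n)) \<and> (\<integral>w. T (Suc n) w \<partial>M) = 0
      \<and> (\<integral>w. \<bar>T (Suc n) w\<bar> \<partial>M) \<le> (\<integral>w. \<bar>f (Suc n) w * W (Suc n) w\<bar> * indicator (at_risk i (Suc n)) w \<partial>M)"
    for n
  proof -
    have j: "1 \<le> Suc n" by simp
    have "at_risk i (Suc n) \<in> sets (\<G> i (Suc n - 1))"
      using at_risk_in_G by simp
    then interpret censored_interval M "\<G> i (Suc n - 1)" Om "at_risk i (Suc n)" "Iobs S C i (Suc n)"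
        "Icen S C i (Suc n)" "f (Suc n)" "W (Suc n)"
      by (intro censored_interval.intro[OF prob_space_axioms] censored_interval_axioms.intro
          subalgebra_G Om Iobs_plus_Icen_at_risk[OF _ j] measurable_Iobs Iobs_nonneg Icen_Om[OF j]
          Icen_01 f[OF j] f_Om[OF j] W[OF j] W_G[OF j] B[OF j] dominant(1))
    show ?thesis
      using integrable_term integral_term_eq_zero integral_abs_term_le unfolding T_def by simp
  qed
  have "AE w in M. \<forall>n\<ge>tau S C i w. T (Suc n) w = 0"
    using after_tau[of i] by eventually_elim (simp add: T_def)
  moreover have "summable (\<lambda>n. \<integral>w. \<bar>T (Suc n) w\<bar> \<partial>M)"
    by (rule summable_comparison_test'[OF dominant(2)]) (use interval in simp)
  ultimately show ?thesis
    using random_length_sum_integral[OF measurable_tau, of "\<lambda>n. T (Suc n)"] interval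
    by (simp add: sum.atLeast1_atMost_eq)
qed

lemma gobs1_unbiased:
  assumes g_int: "\<And>i. 1 \<le> i \<Longrightarrow>
          (\<integral>\<^sup>+ \<omega>. (\<Squnion>j\<in>{1..}. ennreal (norm (Zres S mu V \<theta> i j \<omega> *\<^sub>R fgrad mu V \<theta> i j \<omega>)))
                   * ennreal (real (tau S C i \<omega>)) \<partial>M) < \<infinity>"
    and B_f: "\<And>i j. 1 \<le> i \<Longrightarrow> 1 \<le> j \<Longrightarrow>
          AE \<omega> in M. Icen S C i j \<omega> * real_cond_exp M (O_alg M (fgrad mu V \<theta>) (Icen S C) i)
                                         (Zres S mu V \<theta> i j) \<omega>
                    = Icen S C i j \<omega> * real_cond_exp M (sig_rv M (Icen S C i j)) (Zres S mu V \<theta> i j) \<omega>"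
  shows "integrable M (gobs1 M S C mu V \<theta> n) \<and> (\<integral>\<omega>. gobs1 M S C mu V \<theta> n \<omega> \<partial>M) = 0"
proof (rule integrable_integral_eq_zero_componentwise)
  fix e :: "real^'p" assume e: "e \<in> Basis"
  define F where "F i \<omega> = (\<Sum>j=1..tau S C i \<omega>.
      (fgrad mu V \<theta> i j \<omega> \<bullet> e) * Zres S mu V \<theta> i j \<omega> * Iobs S C i j \<omega>
      + (fgrad mu V \<theta> i j \<omega> \<bullet> e) * Icen S C i j \<omega> * mean_given M (Zres S mu V \<theta> i j) (Icen S C i j))"
    for i \<omega>
  have gobs1_eq: "(\<lambda>\<omega>. gobs1 M S C mu V \<theta> n \<omega> \<bullet> e) = (\<lambda>\<omega>. \<Sum>i=1..n. F i \<omega>)"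
    by (simp add: fun_eq_iff gobs1_def F_def mean_given_def inner_sum_left algebra_simps)
  have "integrable M (F i) \<and> (\<integral>\<omega>. F i \<omega> \<partial>M) = 0" if "i \<in> {1..n}" for i
  proof -
    have i: "1 \<le> i" using that by simp
    have Om: "subalgebra M (O_alg M (fgrad mu V \<theta>) (Icen S C) i)"
      by (intro subalgebra_O_alg) (auto intro!: borel_measurable_scaleR measurable_fgrad measurable_Icen)
    have dom: "(\<integral>\<^sup>+ w. (\<Squnion>j\<in>{1..}. ennreal \<bar>(fgrad mu V \<theta> i j w \<bullet> e) * Zres S mu V \<theta> i j w\<bar>)
            * ennreal (real (tau S C i w)) \<partial>M) < \<infinity>" (is "?lhs < \<infinity>")
    proof -
      have "?lhs \<le> (\<integral>\<^sup>+ w. (\<Squnion>j\<in>{1..}. ennreal (norm (Zres S mu V \<theta> i j w *\<^sub>R fgrad mu V \<theta> i j w)))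
          * ennreal (real (tau S C i w)) \<partial>M)"
        using nn_integral_SUP_abs_inner_le[OF e, where F = "\<lambda>j w. Zres S mu V \<theta> i j w *\<^sub>R fgrad mu V \<theta> i j w"]
        by (simp add: mult.commute)
      also have "\<dots> < \<infinity>"
        by (rule g_int[OF i])
      finally show ?thesis .
    qed
    show ?thesis
      unfolding F_def
      by (rule subject_unbiased[where f = "\<lambda>j w. fgrad mu V \<theta> i j w \<bullet> e" and W = "Zres S mu V \<theta> i",
            OF fgrad_component_measurable[OF _ e] integrable_Zres cond_exp_Zres Om
            measurable_O_alg_indicator measurable_O_alg_component B_f[OF i] dom])
  qed
  then show "integrable M (\<lambda>\<omega>. gobs1 M S C mu V \<theta> n \<omega> \<bullet> e)
      \<and> (\<integral>\<omega>. gobs1 M S C mu V \<theta> n \<omega> \<bullet> e \<partial>M) = 0"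
    unfolding gobs1_eq by (rule integrable_sum_integral_eq_zero)
qed

lemma gobs2_unbiased:
  assumes h_int: "\<And>i. 1 \<le> i \<Longrightarrow>
          (\<integral>\<^sup>+ \<omega>. (\<Squnion>j\<in>{1..}. ennreal \<bar>b i j \<omega> * ((Zres S mu V \<theta> i j \<omega>)\<^sup>2 - \<sigma>2)\<bar>)
                   * ennreal (real (tau S C i \<omega>)) \<partial>M) < \<infinity>"
    and B_b: "\<And>i j. 1 \<le> i \<Longrightarrow> 1 \<le> j \<Longrightarrow>
          AE \<omega> in M. Icen S C i j \<omega> * real_cond_exp M (O_alg M b (Icen S C) i)
                                         (\<lambda>\<omega>. (Zres S mu V \<theta> i j \<omega>)\<^sup>2 - \<sigma>2) \<omega>
                    = Icen S C i j \<omega> * real_cond_exp M (sig_rv M (Icen S C i j))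
                                         (\<lambda>\<omega>. (Zres S mu V \<theta> i j \<omega>)\<^sup>2 - \<sigma>2) \<omega>"
  shows "integrable M (gobs2 M S C mu V b \<theta> \<sigma>2 n) \<and> (\<integral>\<omega>. gobs2 M S C mu V b \<theta> \<sigma>2 n \<omega> \<partial>M) = 0"
proof -
  define F where "F i \<omega> = (\<Sum>j=1..tau S C i \<omega>. b i j \<omega> * ((Zres S mu V \<theta> i j \<omega>)\<^sup>2 - \<sigma>2) * Iobs S C i j \<omega>
      + b i j \<omega> * Icen S C i j \<omega> * mean_given M (\<lambda>\<omega>. (Zres S mu V \<theta> i j \<omega>)\<^sup>2 - \<sigma>2) (Icen S C i j))"
    for i \<omega>
  have gobs2_eq: "gobs2 M S C mu V b \<theta> \<sigma>2 n = (\<lambda>\<omega>. \<Sum>i=1..n. F i \<omega>)"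
    by (simp add: fun_eq_iff gobs2_def F_def mean_given_def)
  have "integrable M (F i) \<and> (\<integral>\<omega>. F i \<omega> \<partial>M) = 0" if "i \<in> {1..n}" for i
  proof -
    have i: "1 \<le> i" using that by simp
    have b_M: "b i j \<in> borel_measurable M" if "1 \<le> j" for j
      using that by (rule measurable_G_imp_M[OF b_G])
    have Om: "subalgebra M (O_alg M b (Icen S C) i)"
      using b_M by (intro subalgebra_O_alg) auto
    have b_Om: "(\<lambda>w. Icen S C i j w * b i j w) \<in> borel_measurable (O_alg M b (Icen S C) i)"
      if "1 \<le> j" for j
      using measurable_O_alg_product[OF that, where g = b and I = "Icen S C"] by simp
    have W: "integrable M (\<lambda>w. (Zres S mu V \<theta> i j w)\<^sup>2 - \<sigma>2)" if "1 \<le> j" for j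
      using Z_sq[OF that] by simp
    show ?thesis
      unfolding F_def
      by (rule subject_unbiased[where f = "b i" and W = "\<lambda>j w. (Zres S mu V \<theta> i j w)\<^sup>2 - \<sigma>2",
            OF b_G W cond_exp_Zres_sq Om measurable_O_alg_indicator b_Om B_b[OF i] h_int[OF i]])
  qed
  then show ?thesis
    unfolding gobs2_eq by (rule integrable_sum_integral_eq_zero)
qed

end

theorem proposition2p2:
  fixes M :: "'w measure" and N :: "'c measure"
    and K :: "((real^'p::finite) \<times> real) set"
    and \<theta> :: "real^'p" and \<sigma>2 :: real
    and S :: "nat \<Rightarrow> nat \<Rightarrow> 'w \<Rightarrow> real" and x :: "nat \<Rightarrow> nat \<Rightarrow> 'w \<Rightarrow> 'c"
    and C :: "nat \<Rightarrow> 'w \<Rightarrow> real"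
    and mu V :: "nat \<Rightarrow> nat \<Rightarrow> real^'p \<Rightarrow> 'w \<Rightarrow> real"
    and b :: "nat \<Rightarrow> nat \<Rightarrow> 'w \<Rightarrow> real"
  assumes P: "prob_space M"
    and K: "compact K" "(\<theta>, \<sigma>2) \<in> K"
    \<comment> \<open>event times, censoring times, covariates\<close>
    and S_meas: "\<And>i j. S i j \<in> borel_measurable M"
    and x_meas: "\<And>i j. x i j \<in> measurable M N"
    and C_meas: "\<And>i. C i \<in> borel_measurable M"
    and S0: "\<And>i \<omega>. \<omega> \<in> space M \<Longrightarrow> S i 0 \<omega> = 0"
    and S_mono: "\<And>i \<omega>. \<omega> \<in> space M \<Longrightarrow> strict_mono (\<lambda>j. S i j \<omega>)"
    and C_pos: "\<And>i \<omega>. \<omega> \<in> space M \<Longrightarrow> 0 < C i \<omega>"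
    \<comment> \<open>the data vectors (S_ij, x_ij, C_i; j >= 1) are i.i.d. over i\<close>
    and indep: "prob_space.indep_vars M
          (\<lambda>_. (\<Pi>\<^sub>M j\<in>{1::nat..}. borel \<Otimes>\<^sub>M N) \<Otimes>\<^sub>M borel)
          (\<lambda>i \<omega>. (\<lambda>j\<in>{1..}. (S i j \<omega>, x i j \<omega>), C i \<omega>)) {1..}"
    and ident: "\<And>i. 1 \<le> i \<Longrightarrow>
          distr M ((\<Pi>\<^sub>M j\<in>{1::nat..}. borel \<Otimes>\<^sub>M N) \<Otimes>\<^sub>M borel)
            (\<lambda>\<omega>. (\<lambda>j\<in>{1..}. (S i j \<omega>, x i j \<omega>), C i \<omega>))
        = distr M ((\<Pi>\<^sub>M j\<in>{1::nat..}. borel \<Otimes>\<^sub>M N) \<Otimes>\<^sub>M borel)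
            (\<lambda>\<omega>. (\<lambda>j\<in>{1..}. (S 1 j \<omega>, x 1 j \<omega>), C 1 \<omega>))"
    \<comment> \<open>finite second moments of the gap times\<close>
    and Y_sq: "\<And>i j. 1 \<le> j \<Longrightarrow> integrable M (\<lambda>\<omega>. (gap S i j \<omega>)\<^sup>2)"
    \<comment> \<open>mu_ij, V_ij: F_{i,j-1}-measurable for every parameter value, V > 0, differentiable in theta\<close>
    and mu_meas: "\<And>i j t. 1 \<le> j \<Longrightarrow> mu i j t \<in> borel_measurable (F_alg M N S x i (j - 1))"
    and V_meas: "\<And>i j t. 1 \<le> j \<Longrightarrow> V i j t \<in> borel_measurable (F_alg M N S x i (j - 1))"
    and V_pos: "\<And>i j t \<omega>. 1 \<le> j \<Longrightarrow> \<omega> \<in> space M \<Longrightarrow> 0 < V i j t \<omega>"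
    and mu_diff: "\<And>i j \<omega>. 1 \<le> j \<Longrightarrow> \<omega> \<in> space M \<Longrightarrow> (\<lambda>t. mu i j t \<omega>) differentiable (at \<theta>)"
    \<comment> \<open>conditional moment identities given F_{i,j-1}\<close>
    and mean_F: "\<And>i j. 1 \<le> j \<Longrightarrow>
          AE \<omega> in M. real_cond_exp M (F_alg M N S x i (j - 1)) (gap S i j) \<omega> = mu i j \<theta> \<omega>"
    and var_F: "\<And>i j. 1 \<le> j \<Longrightarrow>
          AE \<omega> in M. real_cond_exp M (F_alg M N S x i (j - 1))
                        (\<lambda>\<omega>. (gap S i j \<omega> - mu i j \<theta> \<omega>)\<^sup>2) \<omega> = \<sigma>2 * (V i j \<theta> \<omega>)\<^sup>2"
    \<comment> \<open>assumption (A): the same identities given G_{i,j-1}\<close>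
    and mean_G: "\<And>i j. 1 \<le> j \<Longrightarrow>
          AE \<omega> in M. real_cond_exp M (G_alg M N S x C i (j - 1)) (gap S i j) \<omega> = mu i j \<theta> \<omega>"
    and var_G: "\<And>i j. 1 \<le> j \<Longrightarrow>
          AE \<omega> in M. real_cond_exp M (G_alg M N S x C i (j - 1))
                        (\<lambda>\<omega>. (gap S i j \<omega> - mu i j \<theta> \<omega>)\<^sup>2) \<omega> = \<sigma>2 * (V i j \<theta> \<omega>)\<^sup>2"
    and Z_sq: "\<And>i j. 1 \<le> j \<Longrightarrow> integrable M (\<lambda>\<omega>. (Zres S mu V \<theta> i j \<omega>)\<^sup>2)"
    and b_meas: "\<And>i j. 1 \<le> j \<Longrightarrow> b i j \<in> borel_measurable (F_alg M N S x i (j - 1))"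
    \<comment> \<open>tau_i finite a.s.\<close>
    and tau_fin: "\<And>i. AE \<omega> in M. \<exists>j\<ge>1. C i \<omega> \<le> S i j \<omega>"
    \<comment> \<open>g_i(theta) tau_i and h_i(eta) tau_i integrable\<close>
    and g_int: "\<And>i. 1 \<le> i \<Longrightarrow>
          (\<integral>\<^sup>+ \<omega>. (\<Squnion>j\<in>{1..}. ennreal (norm (Zres S mu V \<theta> i j \<omega> *\<^sub>R fgrad mu V \<theta> i j \<omega>)))
                   * ennreal (real (tau S C i \<omega>)) \<partial>M) < \<infinity>"
    and h_int: "\<And>i. 1 \<le> i \<Longrightarrow>
          (\<integral>\<^sup>+ \<omega>. (\<Squnion>j\<in>{1..}. ennreal \<bar>b i j \<omega> * ((Zres S mu V \<theta> i j \<omega>)\<^sup>2 - \<sigma>2)\<bar>)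
                   * ennreal (real (tau S C i \<omega>)) \<partial>M) < \<infinity>"
    \<comment> \<open>conditions (B_f(theta)) and (B_b(eta))\<close>
    and B_f: "\<And>i j. 1 \<le> i \<Longrightarrow> 1 \<le> j \<Longrightarrow>
          AE \<omega> in M. Icen S C i j \<omega> * real_cond_exp M (O_alg M (fgrad mu V \<theta>) (Icen S C) i)
                                         (Zres S mu V \<theta> i j) \<omega>
                    = Icen S C i j \<omega> * real_cond_exp M (sig_rv M (Icen S C i j)) (Zres S mu V \<theta> i j) \<omega>"
    and B_b: "\<And>i j. 1 \<le> i \<Longrightarrow> 1 \<le> j \<Longrightarrow>
          AE \<omega> in M. Icen S C i j \<omega> * real_cond_exp M (O_alg M b (Icen S C) i)
                                         (\<lambda>\<omega>. (Zres S mu V \<theta> i j \<omega>)\<^sup>2 - \<sigma>2) \<omega>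
                    = Icen S C i j \<omega> * real_cond_exp M (sig_rv M (Icen S C i j))
                                         (\<lambda>\<omega>. (Zres S mu V \<theta> i j \<omega>)\<^sup>2 - \<sigma>2) \<omega>"
  shows "\<forall>n\<ge>1. integrable M (gobs1 M S C mu V \<theta> n) \<and> (\<integral>\<omega>. gobs1 M S C mu V \<theta> n \<omega> \<partial>M) = 0
           \<and> integrable M (gobs2 M S C mu V b \<theta> \<sigma>2 n) \<and> (\<integral>\<omega>. gobs2 M S C mu V b \<theta> \<sigma>2 n \<omega> \<partial>M) = 0"
proof -
  interpret recurrent_event_model M N S x C mu V \<theta> \<sigma>2 b
    by (intro recurrent_event_model.intro recurrent_event_model_axioms.intro P S_meas x_meas C_meas
        S0 S_mono C_pos tau_fin Y_sq mu_meas V_meas V_pos mu_diff mean_G var_G Z_sq b_meas)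
  show ?thesis
    using gobs1_unbiased[OF g_int B_f] gobs2_unbiased[OF h_int B_b] by blast
qed

end
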